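(* Suppose that $$\lim_{n\to\infty}\frac{\sqrt n\,\psi(n)}{S(n)}=0,$$ where $\psi(n)=S(n-1)-S(n)=P(n-1<X\le n)$. Then $\lim_{n\to\infty}\mathrm{Var}[\widetilde H_n]=\infty$.
   Context: $X$ is a positive random variable with survival function $S(x)=P(X>x)$ satisfying $S(x)>0$ for all $x\ge0$. Let $X_1,\dots,X_n$ be independent copies of $X$, and let $\widehat S_n(x)=\frac1n\sum_{i=1}^n\mathbf 1\{X_i>x\}$ be the empirical survival function. Define $$\widetilde H_n=\sum_{j=1}^n\mathbf 1\{\widehat S_n(j-1)\ge j/n\}.$$ *)

theory Defs
  imports "HOL-Probability.Probability"
begin

definition surv :: "'a measure \<Rightarrow> ('a \<Rightarrow> real) \<Rightarrow> real \<Rightarrow> real" where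
  "surv M Y x = measure M {\<omega> \<in> space M. Y \<omega> > x}"

text \<open>Empirical survival function of the sample X_1,...,X_n, which are here
  the variables X 0, ..., X (n-1).\<close>
definition emp_surv :: "(nat \<Rightarrow> 'a \<Rightarrow> real) \<Rightarrow> nat \<Rightarrow> 'a \<Rightarrow> real \<Rightarrow> real" where
  "emp_surv X n \<omega> x = real (card {i \<in> {..<n}. X i \<omega> > x}) / real n"

definition Htilde :: "(nat \<Rightarrow> 'a \<Rightarrow> real) \<Rightarrow> nat \<Rightarrow> 'a \<Rightarrow> real" where
  "Htilde X n \<omega> = (\<Sum>j\<in>{1..n}. if emp_surv X n \<omega> (real j - 1) \<ge> real j / real n then 1 else 0)"

end

theory Submission
  imports Defs
begin

text \<open>
  Let S be the survival function of X and H = Htilde X n. The variance of H is bounded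
  below by a two-point argument: if H \<le> a and H \<ge> a + L both have probability at
  least 1/256, then Var H \<ge> L^2/1024. Since H \<ge> b as soon as at least b sample
  points exceed b - 1, and H \<le> a as soon as at most a sample points exceed a, both
  events are fluctuation events of binomial exceedance counts, and a fourth-moment
  anticoncentration bound gives them probability at least 1/256 provided n S(b - 1) is
  at least b, n S(a) exceeds a by at most 1/32 of its standard deviation, and these
  standard deviations are at least 1.

  Next comes a purely
  deterministic analysis of S: choosing b as the last level k \<le> n with k \<le> n S(k - 1),
  the hypothesis sqrt n \<psi>(n) = o(S(n)) makes S almost constant on [b - L, b], so that
  a = b - L and b satisfy the conditions above for every large n. The theorem follows
  by letting L grow.
\<close>

lemma (in prob_space) bounded_rv_integrable:
  fixes f :: "'a \<Rightarrow> real"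
  assumes "f \<in> borel_measurable M" and "\<And>x. x \<in> space M \<Longrightarrow> \<bar>f x\<bar> \<le> B"
  shows "integrable M f"
  using assms by (intro integrable_const_bound[where B=B]) auto

lemma (in prob_space) bounded_rv_power_integrable:
  fixes f :: "'a \<Rightarrow> real"
  assumes "f \<in> borel_measurable M" and "\<And>x. x \<in> space M \<Longrightarrow> \<bar>f x\<bar> \<le> B"
  shows "integrable M (\<lambda>x. f x ^ k)"
proof (rule bounded_rv_integrable[where B="B ^ k"])
  show "(\<lambda>x. f x ^ k) \<in> borel_measurable M" using assms(1) by measurable
  fix x assume "x \<in> space M"
  then show "\<bar>f x ^ k\<bar> \<le> B ^ k" using assms(2) by (simp add: power_abs power_mono)
qed

text \<open>A random variable that lies below a and above b, each with probability at least c,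
  has variance at least c ((b - a)/2)^2: one of the two events lies at distance at least
  (b - a)/2 from the mean, and Chebyshev's inequality bounds its probability.\<close>

lemma (in prob_space) variance_ge_two_point:
  fixes H :: "'a \<Rightarrow> real"
  assumes Hm: "H \<in> borel_measurable M" and Hb: "\<And>x. x \<in> space M \<Longrightarrow> \<bar>H x\<bar> \<le> B"
    and "a < b"
    and low: "c \<le> prob {x\<in>space M. H x \<le> a}" and high: "c \<le> prob {x\<in>space M. b \<le> H x}"
  shows "c * ((b - a) / 2)\<^sup>2 \<le> variance H"
proof -
  define d where "d = (b - a) / 2"
  define far where "far = {x\<in>space M. d \<le> \<bar>H x - expectation H\<bar>}"
  have d: "0 < d" using \<open>a < b\<close> by (simp add: d_def)
  have far_sets: "far \<in> sets M" unfolding far_def using Hm by measurable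
  have "c \<le> prob far"
  proof (cases "expectation H \<le> (a + b) / 2")
    case True
    have "{x\<in>space M. b \<le> H x} \<subseteq> far" using True by (auto simp: far_def d_def abs_if)
    then show ?thesis using high far_sets by (meson finite_measure_mono order_trans)
  next
    case False
    have "{x\<in>space M. H x \<le> a} \<subseteq> far" using False by (auto simp: far_def d_def abs_if)
    then show ?thesis using low far_sets by (meson finite_measure_mono order_trans)
  qed
  also have "prob far \<le> variance H / d\<^sup>2"
    unfolding far_def
    using Hm d bounded_rv_power_integrable[OF Hm Hb, of 2] by (intro Chebyshev_inequality) auto
  finally show ?thesis using d by (simp add: d_def[symmetric] field_simps)
qed

text \<open>A lower bound on the first absolute moment from the second and fourth moments,
  via the pointwise inequality Y^2 \<le> 4 s |Y| + Y^4/(16 s^2).\<close>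

lemma (in prob_space) abs_moment_lower_bound:
  fixes Y :: "'a \<Rightarrow> real"
  assumes Ym: "Y \<in> borel_measurable M" and Yb: "\<And>x. x \<in> space M \<Longrightarrow> \<bar>Y x\<bar> \<le> B"
    and s: "0 < s" and E2: "expectation (\<lambda>x. (Y x)^2) = s^2"
    and E4: "expectation (\<lambda>x. (Y x)^4) \<le> 4 * s^4"
  shows "3 * s / 16 \<le> expectation (\<lambda>x. \<bar>Y x\<bar>)"
proof -
  have int_abs: "integrable M (\<lambda>x. \<bar>Y x\<bar>)"
    using bounded_rv_integrable[OF Ym Yb] by simp
  note int_pow = bounded_rv_power_integrable[OF Ym Yb]
  have split_square: "(Y x)^2 \<le> 4 * s * \<bar>Y x\<bar> + (Y x)^4 / (16 * s^2)" for x
  proof (cases "\<bar>Y x\<bar> \<le> 4 * s")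
    case True
    have "(Y x)^2 = \<bar>Y x\<bar> * \<bar>Y x\<bar>" by (simp add: power2_eq_square)
    also have "\<dots> \<le> 4 * s * \<bar>Y x\<bar>" by (rule mult_right_mono[OF True abs_ge_zero])
    moreover have "0 \<le> (Y x)^4 / (16 * s^2)" using s by simp
    ultimately show ?thesis by linarith
  next
    case False
    then have "(4 * s)^2 \<le> \<bar>Y x\<bar>^2" using s by (intro power_mono) auto
    then have "16 * s^2 \<le> (Y x)^2" by (simp add: power_mult_distrib)
    then have "(Y x)^2 * (16 * s^2) \<le> (Y x)^2 * (Y x)^2" by (rule mult_left_mono) auto
    then have "(Y x)^2 \<le> (Y x)^4 / (16 * s^2)"
      using s by (simp add: field_simps power4_eq_xxxx power2_eq_square)
    moreover have "0 \<le> 4 * s * \<bar>Y x\<bar>" using s by simp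
    ultimately show ?thesis by linarith
  qed
  have "s^2 \<le> expectation (\<lambda>x. 4 * s * \<bar>Y x\<bar> + (Y x)^4 / (16 * s^2))"
  proof -
    have "expectation (\<lambda>x. (Y x)^2) \<le> expectation (\<lambda>x. 4 * s * \<bar>Y x\<bar> + (Y x)^4 / (16 * s^2))"
      using split_square int_abs int_pow by (intro integral_mono) auto
    then show ?thesis using E2 by simp
  qed
  also have "\<dots> = 4 * s * expectation (\<lambda>x. \<bar>Y x\<bar>) + expectation (\<lambda>x. (Y x)^4) / (16 * s^2)"
    using int_abs int_pow by simp
  also have "\<dots> \<le> 4 * s * expectation (\<lambda>x. \<bar>Y x\<bar>) + s^2 / 4"
    using divide_right_mono[OF E4, of "16 * s^2"] s
    by (simp add: power4_eq_xxxx power2_eq_square)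
  finally have "s * (3 * s) \<le> s * (16 * expectation (\<lambda>x. \<bar>Y x\<bar>))"
    by (simp add: power2_eq_square algebra_simps)
  then show ?thesis using s by simp
qed

lemma (in prob_space) upper_tail_anticoncentration:
  fixes Y :: "'a \<Rightarrow> real"
  assumes Ym: "Y \<in> borel_measurable M" and Yb: "\<And>x. x \<in> space M \<Longrightarrow> \<bar>Y x\<bar> \<le> B"
    and s: "0 < s" and E1: "expectation Y = 0" and E2: "expectation (\<lambda>x. (Y x)^2) = s^2"
    and E4: "expectation (\<lambda>x. (Y x)^4) \<le> 4 * s^4"
  shows "1/256 \<le> prob {x\<in>space M. s / 32 \<le> Y x}"
proof -
  define A where "A = {x\<in>space M. s / 32 \<le> Y x}"
  have A_sets: "A \<in> sets M" unfolding A_def using Ym by measurable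
  have int_Y: "integrable M Y" by (rule bounded_rv_integrable[OF Ym Yb])
  have int_pos: "integrable M (\<lambda>x. max (Y x) 0)"
    by (rule bounded_rv_integrable[where B=B])
      (use Ym Yb in \<open>auto simp: abs_le_iff intro: order_trans[OF abs_ge_zero Yb]\<close>)
  have int_A: "integrable M (indicator A :: 'a \<Rightarrow> real)"
    using A_sets by (intro integrable_real_indicator) (auto simp: emeasure_eq_measure)
  note int_sq = bounded_rv_power_integrable[OF Ym Yb, of 2]
  \<comment> \<open>Since Y is centred, its positive part carries half of the absolute first moment.\<close>
  have "expectation (\<lambda>x. \<bar>Y x\<bar>) = expectation (\<lambda>x. 2 * max (Y x) 0 - Y x)"
    by (intro Bochner_Integration.integral_cong) auto
  also have "\<dots> = 2 * expectation (\<lambda>x. max (Y x) 0)" using int_pos int_Y E1 by simp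
  finally have pos_part: "3 * s / 32 \<le> expectation (\<lambda>x. max (Y x) 0)"
    using abs_moment_lower_bound[OF Ym Yb s E2 E4] by simp
  \<comment> \<open>Pointwise: below s/32 the positive part is small, above s/32 it is controlled
    by the square of Y.\<close>
  have split_pos: "max (Y x) 0 \<le> s / 32 + 8 * s * indicator A x + (Y x)^2 / (32 * s)"
    if x: "x \<in> space M" for x
  proof (cases "s / 32 \<le> Y x")
    case True
    have "32 * s * Y x \<le> (Y x)^2 + 256 * s^2"
      using zero_le_power2[of "Y x - 16 * s"] by (simp add: power2_eq_square algebra_simps)
    then have "Y x \<le> (Y x)^2 / (32 * s) + 8 * s" using s by (simp add: field_simps power2_eq_square)
    then show ?thesis using True x s by (auto simp: A_def)
  next
    case False
    have "0 \<le> (Y x)^2 / (32 * s)" "0 \<le> 8 * s * indicator A x" using s by auto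
    moreover have "max (Y x) 0 \<le> s / 32" using s False by auto
    ultimately show ?thesis by linarith
  qed
  have "3 * s / 32 \<le> expectation (\<lambda>x. s / 32 + 8 * s * indicator A x + (Y x)^2 / (32 * s))"
    using pos_part integral_mono[OF int_pos _ split_pos] int_A int_sq by fastforce
  also have "\<dots> = s / 32 + 8 * s * prob A + s / 32"
    using int_A int_sq A_sets E2 s by (simp add: prob_space power2_eq_square)
  finally show ?thesis using s by (simp add: A_def field_simps)
qed

lemma (in prob_space) bounded_power_product_integrable:
  fixes A B :: "'a \<Rightarrow> real"
  assumes "A \<in> borel_measurable M" "B \<in> borel_measurable M"
    and "\<And>x. x \<in> space M \<Longrightarrow> \<bar>A x\<bar> \<le> a" "\<And>x. x \<in> space M \<Longrightarrow> \<bar>B x\<bar> \<le> b"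
  shows "integrable M (\<lambda>x. A x ^ i * B x ^ j)"
proof (rule bounded_rv_integrable[where B="a ^ i * b ^ j"])
  show "(\<lambda>x. A x ^ i * B x ^ j) \<in> borel_measurable M" using assms(1,2) by measurable
  fix x assume x: "x \<in> space M"
  have "\<bar>A x ^ i * B x ^ j\<bar> = \<bar>A x\<bar> ^ i * \<bar>B x\<bar> ^ j" by (simp add: abs_mult power_abs)
  also have "\<dots> \<le> a ^ i * b ^ j"
    using assms(3,4)[OF x] by (intro mult_mono power_mono) auto
  finally show "\<bar>A x ^ i * B x ^ j\<bar> \<le> a ^ i * b ^ j" .
qed

lemma (in prob_space) indep_power_product:
  fixes A B :: "'a \<Rightarrow> real"
  assumes ind: "indep_var borel A borel B"
    and "A \<in> borel_measurable M" "B \<in> borel_measurable M"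
    and "\<And>x. x \<in> space M \<Longrightarrow> \<bar>A x\<bar> \<le> a" "\<And>x. x \<in> space M \<Longrightarrow> \<bar>B x\<bar> \<le> b"
  shows "expectation (\<lambda>x. A x ^ i * B x ^ j) = expectation (\<lambda>x. A x ^ i) * expectation (\<lambda>x. B x ^ j)"
proof -
  have "indep_var borel (\<lambda>x. A x ^ i) borel (\<lambda>x. B x ^ j)"
    using indep_var_compose[unfolded comp_def, OF ind, of "\<lambda>x. x ^ i" borel "\<lambda>x. x ^ j" borel]
    by simp
  then show ?thesis
    using bounded_power_product_integrable[OF assms(2-5), of i 0]
      bounded_power_product_integrable[OF assms(2-5), of 0 j]
    by (intro indep_var_lebesgue_integral) auto
qed

lemma fourth_power_binomial:
  "(a + b :: real)^4 = a^4 + 4 * (a^3 * b) + 6 * (a^2 * b^2) + 4 * (a * b^3) + b^4"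
  by (simp add: power4_eq_xxxx power3_eq_cube power2_eq_square algebra_simps)

lemma (in prob_space) moments_add_independent:
  fixes T Z :: "'a \<Rightarrow> real"
  assumes ind: "indep_var borel Z borel T"
    and Zm: "Z \<in> borel_measurable M" and Tm: "T \<in> borel_measurable M"
    and Zb: "\<And>x. x \<in> space M \<Longrightarrow> \<bar>Z x\<bar> \<le> 1" and Tb: "\<And>x. x \<in> space M \<Longrightarrow> \<bar>T x\<bar> \<le> c"
    and EZ: "expectation Z = 0" and ET: "expectation T = 0"
    and EZ2: "expectation (\<lambda>x. (Z x)^2) = v"
  shows "expectation (\<lambda>x. (T x + Z x)^2) = expectation (\<lambda>x. (T x)^2) + v"
    and "expectation (\<lambda>x. (T x + Z x)^4)
           \<le> expectation (\<lambda>x. (T x)^4) + 6 * v * expectation (\<lambda>x. (T x)^2) + v"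
proof -
  note prod = indep_power_product[OF ind Zm Tm Zb Tb]
  note int = bounded_power_product_integrable[OF Zm Tm Zb Tb]
  have EZ4: "expectation (\<lambda>x. (Z x)^4) \<le> v"
  proof -
    have "(Z x)^4 \<le> (Z x)^2" if "x \<in> space M" for x
    proof -
      have "\<bar>Z x\<bar>^2 * \<bar>Z x\<bar>^2 \<le> 1 * \<bar>Z x\<bar>^2"
        using Zb[OF that] by (intro mult_right_mono) (auto simp: abs_square_le_1)
      then show ?thesis by (simp add: power4_eq_xxxx power2_eq_square)
    qed
    then have "expectation (\<lambda>x. (Z x)^4) \<le> expectation (\<lambda>x. (Z x)^2)"
      using int[of 4 0] int[of 2 0] by (intro integral_mono) auto
    then show ?thesis using EZ2 by simp
  qed
  have "expectation (\<lambda>x. (T x + Z x)^2)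
        = expectation (\<lambda>x. Z x^0 * T x^2 + 2 * (Z x^1 * T x^1) + Z x^2 * T x^0)"
    by (rule Bochner_Integration.integral_cong) (auto simp: power2_eq_square algebra_simps)
  also have "\<dots> = expectation (\<lambda>x. (T x)^2) + 2 * (expectation Z * expectation T) + v"
    using int[of 0 2] int[of 1 1] int[of 2 0] prod[of 1 1] EZ2 by simp
  finally show "expectation (\<lambda>x. (T x + Z x)^2) = expectation (\<lambda>x. (T x)^2) + v"
    using EZ by simp
  have "expectation (\<lambda>x. (T x + Z x)^4)
        = expectation (\<lambda>x. Z x^0 * T x^4 + 4 * (Z x^1 * T x^3) + 6 * (Z x^2 * T x^2)
                               + 4 * (Z x^3 * T x^1) + Z x^4 * T x^0)"
    by (rule Bochner_Integration.integral_cong) (auto simp: fourth_power_binomial)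
  also have "\<dots> = expectation (\<lambda>x. (T x)^4) + 4 * (expectation Z * expectation (\<lambda>x. (T x)^3))
                  + 6 * (v * expectation (\<lambda>x. (T x)^2))
                  + 4 * (expectation (\<lambda>x. (Z x)^3) * expectation T) + expectation (\<lambda>x. (Z x)^4)"
    using int[of 0 4] int[of 1 3] int[of 2 2] int[of 3 1] int[of 4 0]
      prod[of 1 3] prod[of 2 2] prod[of 3 1] EZ2 by simp
  finally show "expectation (\<lambda>x. (T x + Z x)^4)
                  \<le> expectation (\<lambda>x. (T x)^4) + 6 * v * expectation (\<lambda>x. (T x)^2) + v"
    using EZ ET EZ4 by simp
qed

lemma (in prob_space) sum_moments:
  fixes Z :: "nat \<Rightarrow> 'a \<Rightarrow> real"
  assumes ind: "indep_vars (\<lambda>_. borel) Z UNIV"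
    and Zm: "\<And>i. Z i \<in> borel_measurable M" and Zb: "\<And>i x. x \<in> space M \<Longrightarrow> \<bar>Z i x\<bar> \<le> 1"
    and EZ: "\<And>i. expectation (Z i) = 0" and EZ2: "\<And>i. expectation (\<lambda>x. (Z i x)^2) = v"
  shows "expectation (\<lambda>x. \<Sum>i<m. Z i x) = 0"
    and "expectation (\<lambda>x. (\<Sum>i<m. Z i x)^2) = m * v
         \<and> expectation (\<lambda>x. (\<Sum>i<m. Z i x)^4) \<le> m * v + 3 * (m * v)^2"
proof -
  have int: "integrable M (Z i)" for i by (rule bounded_rv_integrable[OF Zm Zb])
  show mean: "expectation (\<lambda>x. \<Sum>i<m. Z i x) = 0" for m
    using int EZ by (simp add: Bochner_Integration.integral_sum)
  have v: "0 \<le> v" using EZ2[of 0] by (metis integral_nonneg_AE zero_le_power2 AE_I2)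
  show "expectation (\<lambda>x. (\<Sum>i<m. Z i x)^2) = m * v
        \<and> expectation (\<lambda>x. (\<Sum>i<m. Z i x)^4) \<le> m * v + 3 * (m * v)^2"
  proof (induction m)
    case 0
    then show ?case by simp
  next
    case (Suc m)
    define T where "T = (\<lambda>x. \<Sum>i<m. Z i x)"
    have Tm: "T \<in> borel_measurable M" unfolding T_def using Zm by measurable
    have Tb: "\<bar>T x\<bar> \<le> real m" if "x \<in> space M" for x
    proof -
      have "\<bar>T x\<bar> \<le> (\<Sum>i<m. \<bar>Z i x\<bar>)" unfolding T_def by (rule sum_abs)
      also have "\<dots> \<le> (\<Sum>i<m. 1)" using Zb[OF that] by (intro sum_mono) auto
      finally show ?thesis by simp
    qed
    have ind_T: "indep_var borel (Z m) borel T"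
      unfolding T_def using ind by (intro indep_vars_sum) (auto intro: indep_vars_subset)
    note step = moments_add_independent[OF ind_T Zm Tm Zb Tb EZ mean[of m, folded T_def] EZ2]
    have sum_eq: "(\<lambda>x. \<Sum>i<Suc m. Z i x) = (\<lambda>x. T x + Z m x)" unfolding T_def by simp
    have "expectation (\<lambda>x. (T x + Z m x)^4) \<le> m * v + 3 * (m * v)^2 + 6 * v * (m * v) + v"
      using step(2) Suc.IH v unfolding T_def by (smt (verit) mult_left_mono)
    also have "\<dots> \<le> Suc m * v + 3 * (Suc m * v)^2"
      using v by (simp add: power2_eq_square algebra_simps)
    finally show ?case using step(1) Suc.IH unfolding sum_eq T_def by (simp add: algebra_simps)
  qed
qed

lemma card_as_indicator_sum:
  "real (card {i\<in>{..<(n::nat)}. P i}) = (\<Sum>i<n. if P i then 1 else (0::real))"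
  unfolding real_of_card by (rule sum.inter_filter) simp

lemma (in prob_space) two_sided_anticoncentration:
  fixes Y :: "'a \<Rightarrow> real"
  assumes Ym: "Y \<in> borel_measurable M" and Yb: "\<And>x. x \<in> space M \<Longrightarrow> \<bar>Y x\<bar> \<le> B"
    and s: "1 \<le> s" and EY: "expectation Y = 0" and EY2: "expectation (\<lambda>x. (Y x)^2) = s^2"
    and EY4: "expectation (\<lambda>x. (Y x)^4) \<le> s^2 + 3 * (s^2)^2"
  shows "1/256 \<le> prob {x\<in>space M. s / 32 \<le> Y x}"
    and "1/256 \<le> prob {x\<in>space M. Y x \<le> - (s / 32)}"
proof -
  have "s^2 * 1 \<le> s^2 * s^2" using s by (intro mult_left_mono) (auto simp: one_le_power)
  then have EY4': "expectation (\<lambda>x. (Y x)^4) \<le> 4 * s^4"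
    using EY4 by (simp add: power4_eq_xxxx power2_eq_square)
  show "1/256 \<le> prob {x\<in>space M. s / 32 \<le> Y x}"
    using s by (intro upper_tail_anticoncentration[OF Ym Yb _ EY EY2 EY4']) auto
  have "1/256 \<le> prob {x\<in>space M. s / 32 \<le> - Y x}"
    by (rule upper_tail_anticoncentration[where Y="\<lambda>x. - Y x"]) (use Ym Yb EY EY2 EY4' s in auto)
  then show "1/256 \<le> prob {x\<in>space M. Y x \<le> - (s / 32)}" by (simp add: le_minus_iff)
qed

lemma (in prob_space) centred_indicator_moments:
  assumes "A \<in> sets M" and "prob A = p"
  shows "expectation (\<lambda>w. indicator A w - p) = 0"
    and "expectation (\<lambda>w. (indicator A w - p)^2) = p * (1 - p)"
proof -
  have int: "integrable M (indicator A :: 'a \<Rightarrow> real)"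
    using assms by (intro integrable_real_indicator) (auto simp: emeasure_eq_measure)
  then show "expectation (\<lambda>w. indicator A w - p) = 0" using assms by (simp add: prob_space)
  have "expectation (\<lambda>w. (indicator A w - p)^2) = expectation (\<lambda>w. (1 - 2 * p) * indicator A w + p^2)"
    by (rule Bochner_Integration.integral_cong) (auto simp: indicator_def power2_eq_square algebra_simps)
  then show "expectation (\<lambda>w. (indicator A w - p)^2) = p * (1 - p)"
    using int assms by (simp add: prob_space algebra_simps power2_eq_square)
qed

lemma (in prob_space) exceedance_count_anticoncentration:
  fixes X :: "nat \<Rightarrow> 'a \<Rightarrow> real"
  assumes rv: "\<And>i. X i \<in> borel_measurable M"
    and indep: "indep_vars (\<lambda>_. borel) X UNIV"
    and p: "\<And>i. prob {w\<in>space M. t < X i w} = p"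
    and var: "1 \<le> real n * p * (1 - p)"
  shows "1/256 \<le> prob {w\<in>space M.
            real n * p + sqrt (real n * p * (1 - p)) / 32 \<le> real (card {i\<in>{..<n}. t < X i w})}"
    and "1/256 \<le> prob {w\<in>space M.
            real (card {i\<in>{..<n}. t < X i w}) \<le> real n * p - sqrt (real n * p * (1 - p)) / 32}"
proof -
  define Z where "Z i w = (if t < X i w then 1 else 0) - p" for i w
  have p01: "0 \<le> p" "p \<le> 1" using p[of 0] by auto
  have Zm: "Z i \<in> borel_measurable M" for i unfolding Z_def using rv[of i] by measurable
  have Zb: "\<bar>Z i w\<bar> \<le> 1" for i w unfolding Z_def using p01 by auto
  have Z_ind: "indep_vars (\<lambda>_. borel) Z UNIV"
    using indep_vars_compose2[OF indep, of "\<lambda>_ x. (if t < x then 1 else 0) - p" "\<lambda>_. borel"]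
    unfolding Z_def by simp
  have Z_indicator: "expectation (\<lambda>w. f (Z i w))
                       = expectation (\<lambda>w. f (indicator {w\<in>space M. t < X i w} w - p))"
    for f :: "real \<Rightarrow> real" and i
    by (rule Bochner_Integration.integral_cong) (auto simp: Z_def indicator_def)
  have events: "{w\<in>space M. t < X i w} \<in> sets M" for i using rv[of i] by measurable
  note mom = centred_indicator_moments[OF events p]
  have "expectation (Z i) = 0" "expectation (\<lambda>w. (Z i w)^2) = p * (1 - p)" for i
    using Z_indicator[of "\<lambda>z. z" i] Z_indicator[of "\<lambda>z. z^2" i] mom[of i] by simp_all
  note sum_mom = sum_moments[OF Z_ind Zm Zb this, of n]
  define Y where "Y w = (\<Sum>i<n. Z i w)" for w
  define s where "s = sqrt (real n * p * (1 - p))"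
  have s2: "s^2 = real n * p * (1 - p)" and s: "1 \<le> s" unfolding s_def using var by auto
  have Y_count: "Y w = real (card {i\<in>{..<n}. t < X i w}) - real n * p" for w
    unfolding Y_def Z_def card_as_indicator_sum by (simp add: sum_subtractf)
  have Ym: "Y \<in> borel_measurable M" unfolding Y_def using Zm by measurable
  have Yb: "\<bar>Y w\<bar> \<le> real n" for w
  proof -
    have "\<bar>Y w\<bar> \<le> (\<Sum>i<n. \<bar>Z i w\<bar>)" unfolding Y_def by (rule sum_abs)
    also have "\<dots> \<le> (\<Sum>i<n. 1)" using Zb by (intro sum_mono) auto
    finally show ?thesis by simp
  qed
  have EY: "expectation Y = 0" and EY2: "expectation (\<lambda>w. (Y w)^2) = s^2"
    and EY4: "expectation (\<lambda>w. (Y w)^4) \<le> s^2 + 3 * (s^2)^2"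
    using sum_mom s2 unfolding Y_def by (simp_all add: mult.assoc)
  note tails = two_sided_anticoncentration[OF Ym Yb s EY EY2 EY4]
  show "1/256 \<le> prob {w\<in>space M.
          real n * p + sqrt (real n * p * (1 - p)) / 32 \<le> real (card {i\<in>{..<n}. t < X i w})}"
    using tails(1) unfolding Y_count s_def by (simp add: algebra_simps)
  show "1/256 \<le> prob {w\<in>space M.
          real (card {i\<in>{..<n}. t < X i w}) \<le> real n * p - sqrt (real n * p * (1 - p)) / 32}"
    using tails(2) unfolding Y_count s_def by (simp add: algebra_simps)
qed

lemma emp_surv_ge_iff:
  assumes "0 < n"
  shows "real j / real n \<le> emp_surv X n w x \<longleftrightarrow> real j \<le> real (card {i\<in>{..<n}. x < X i w})"
  using assms unfolding emp_surv_def by (simp add: divide_le_cancel)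

lemma exceedance_count_antimono:
  fixes x y :: real
  assumes "x \<le> y"
  shows "card {i\<in>{..<(n::nat)}. y < X i w} \<le> card {i\<in>{..<n}. x < X i w}"
  using assms by (intro card_mono) auto

text \<open>If at least b sample points exceed b - 1, then all first b summands of Htilde are 1.\<close>

lemma Htilde_ge:
  assumes b: "1 \<le> b" "b \<le> n"
    and count: "real b \<le> real (card {i\<in>{..<n}. real b - 1 < X i w})"
  shows "real b \<le> Htilde X n w"
proof -
  have "real b = (\<Sum>j\<in>{1..b}. 1::real)" by simp
  also have "\<dots> = (\<Sum>j\<in>{1..b}. if real j / real n \<le> emp_surv X n w (real j - 1) then 1 else 0)"
  proof (rule sum.cong)
    fix j assume j: "j \<in> {1..b}"
    have "real j \<le> real (card {i\<in>{..<n}. real b - 1 < X i w})" using j count by simp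
    also have "\<dots> \<le> real (card {i\<in>{..<n}. real j - 1 < X i w})"
      using j by (intro of_nat_mono exceedance_count_antimono) auto
    finally show "1 = (if real j / real n \<le> emp_surv X n w (real j - 1) then 1 else (0::real))"
      using emp_surv_ge_iff[of n j X w "real j - 1"] b by simp
  qed simp
  also have "\<dots> \<le> Htilde X n w"
    unfolding Htilde_def using b by (intro sum_mono2) auto
  finally show ?thesis .
qed

text \<open>If at most a sample points exceed a, then all summands with index j > a vanish.\<close>

lemma Htilde_le:
  assumes "0 < n" and count: "real (card {i\<in>{..<n}. real a < X i w}) \<le> real a"
  shows "Htilde X n w \<le> real a"
proof -
  have "Htilde X n w \<le> (\<Sum>j\<in>{1..n}. if j \<le> a then 1 else 0)"
    unfolding Htilde_def
  proof (intro sum_mono)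
    fix j assume "j \<in> {1..n}"
    show "(if real j / real n \<le> emp_surv X n w (real j - 1) then 1 else 0)
          \<le> (if j \<le> a then 1 else (0::real))"
    proof (cases "j \<le> a")
      case False
      have "real (card {i\<in>{..<n}. real j - 1 < X i w}) \<le> real (card {i\<in>{..<n}. real a < X i w})"
        using False by (intro of_nat_mono exceedance_count_antimono) auto
      then have "\<not> real j \<le> real (card {i\<in>{..<n}. real j - 1 < X i w})"
        using count False by linarith
      then show ?thesis using False emp_surv_ge_iff[OF \<open>0 < n\<close>, of j X w] by auto
    qed auto
  qed
  also have "\<dots> = real (card {j\<in>{1..n}. j \<le> a})"
    unfolding real_of_card by (rule sum.inter_filter[symmetric]) simp
  also have "\<dots> \<le> real (card {1..a})"
    by (intro of_nat_mono card_mono) auto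
  finally show ?thesis by simp
qed

lemma Htilde_bounded: "\<bar>Htilde X n w\<bar> \<le> real n"
proof -
  have "0 \<le> Htilde X n w" unfolding Htilde_def by (intro sum_nonneg) auto
  moreover have "Htilde X n w \<le> (\<Sum>j\<in>{1..n}. 1)" unfolding Htilde_def by (intro sum_mono) auto
  ultimately show ?thesis by simp
qed

lemma Htilde_measurable:
  assumes "\<And>i. X i \<in> borel_measurable M"
  shows "Htilde X n \<in> borel_measurable M"
proof -
  have "Htilde X n = (\<lambda>w. \<Sum>j\<in>{1..n}.
                        if real j / real n \<le> (\<Sum>i<n. if real j - 1 < X i w then 1 else 0) / real n
                        then 1 else 0)"
    unfolding Htilde_def emp_surv_def card_as_indicator_sum by simp
  also have "\<dots> \<in> borel_measurable M" using assms by measurable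
  finally show ?thesis .
qed

lemma surv_antimono:
  assumes "finite_measure M" and "Y \<in> borel_measurable M" and "x \<le> y"
  shows "surv M Y y \<le> surv M Y x"
proof -
  have "{w\<in>space M. y < Y w} \<subseteq> {w\<in>space M. x < Y w}" using assms(3) by auto
  moreover have "{w\<in>space M. x < Y w} \<in> sets M" using assms(2) by measurable
  ultimately show ?thesis
    unfolding surv_def by (rule finite_measure.finite_measure_mono[OF assms(1)])
qed

lemma surv_tendsto_zero:
  assumes "finite_measure M" and "Y \<in> borel_measurable M"
  shows "(\<lambda>k. surv M Y (real k)) \<longlonglongrightarrow> 0"
proof -
  have "(\<lambda>k. measure M {w\<in>space M. real k < Y w})
          \<longlonglongrightarrow> measure M (\<Inter>k. {w\<in>space M. real k < Y w})"
    using assms by (intro finite_measure.finite_Lim_measure_decseq) (auto simp: decseq_def)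
  moreover have "(\<Inter>k. {w\<in>space M. real k < Y w}) = {}"
  proof safe
    fix w assume w: "w \<in> (\<Inter>k. {w\<in>space M. real k < Y w})"
    obtain k :: nat where "Y w < real k" using reals_Archimedean2 by blast
    with w show "w \<in> {}" by (metis (mono_tags, lifting) INT_E UNIV_I less_asym mem_Collect_eq)
  qed
  ultimately show ?thesis unfolding surv_def by simp
qed

lemma surv_of_identically_distributed:
  assumes "\<And>i. X i \<in> borel_measurable M"
    and "\<And>i. distr M borel (X i) = distr M borel (X 0)"
  shows "measure M {w\<in>space M. t < X i w} = surv M (X 0) t"
proof -
  have "measure M {w\<in>space M. t < X j w} = measure (distr M borel (X j)) {t<..}" for j
    using assms(1)[of j] by (subst measure_distr) (auto intro!: arg_cong[where f="measure M"])
  then show ?thesis using assms(2)[of i] unfolding surv_def by simp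
qed

lemma (in prob_space) Htilde_upper_event:
  fixes X :: "nat \<Rightarrow> 'a \<Rightarrow> real"
  assumes rv: "\<And>i. X i \<in> borel_measurable M"
    and indep: "indep_vars (\<lambda>_. borel) X UNIV"
    and p: "\<And>i. prob {w\<in>space M. real b - 1 < X i w} = p"
    and b: "1 \<le> b" "b \<le> n" and mean: "real b \<le> real n * p"
    and var: "1 \<le> real n * p * (1 - p)"
  shows "1/256 \<le> prob {w\<in>space M. real b \<le> Htilde X n w}"
proof -
  have "1/256 \<le> prob {w\<in>space M.
          real n * p + sqrt (real n * p * (1 - p)) / 32 \<le> real (card {i\<in>{..<n}. real b - 1 < X i w})}"
    by (rule exceedance_count_anticoncentration(1)[OF rv indep p var])
  also have "\<dots> \<le> prob {w\<in>space M. real b \<le> Htilde X n w}"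
  proof (rule finite_measure_mono)
    show "{w\<in>space M. real b \<le> Htilde X n w} \<in> sets M"
      using Htilde_measurable[OF rv] by measurable
    show "{w\<in>space M. real n * p + sqrt (real n * p * (1 - p)) / 32
                  \<le> real (card {i\<in>{..<n}. real b - 1 < X i w})}
               \<subseteq> {w\<in>space M. real b \<le> Htilde X n w}"
    proof safe
      fix w assume "real n * p + sqrt (real n * p * (1 - p)) / 32
                      \<le> real (card {i\<in>{..<n}. real b - 1 < X i w})"
      moreover have "0 \<le> sqrt (real n * p * (1 - p))" using var by simp
      ultimately have "real b \<le> real (card {i\<in>{..<n}. real b - 1 < X i w})" using mean by linarith
      then show "real b \<le> Htilde X n w" by (rule Htilde_ge[OF b])
    qed
  qed
  finally show ?thesis .
qed

lemma (in prob_space) Htilde_lower_event: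
  fixes X :: "nat \<Rightarrow> 'a \<Rightarrow> real"
  assumes rv: "\<And>i. X i \<in> borel_measurable M"
    and indep: "indep_vars (\<lambda>_. borel) X UNIV"
    and q: "\<And>i. prob {w\<in>space M. real a < X i w} = q"
    and "0 < n" and var: "1 \<le> real n * q * (1 - q)"
    and mean: "real n * q - sqrt (real n * q * (1 - q)) / 32 \<le> real a"
  shows "1/256 \<le> prob {w\<in>space M. Htilde X n w \<le> real a}"
proof -
  have "1/256 \<le> prob {w\<in>space M.
          real (card {i\<in>{..<n}. real a < X i w}) \<le> real n * q - sqrt (real n * q * (1 - q)) / 32}"
    by (rule exceedance_count_anticoncentration(2)[OF rv indep q var])
  also have "\<dots> \<le> prob {w\<in>space M. Htilde X n w \<le> real a}"
  proof (rule finite_measure_mono)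
    show "{w\<in>space M. Htilde X n w \<le> real a} \<in> sets M"
      using Htilde_measurable[OF rv] by measurable
    show "{w\<in>space M. real (card {i\<in>{..<n}. real a < X i w})
                  \<le> real n * q - sqrt (real n * q * (1 - q)) / 32}
               \<subseteq> {w\<in>space M. Htilde X n w \<le> real a}"
      using mean by (auto intro!: Htilde_le[OF \<open>0 < n\<close>])
  qed
  finally show ?thesis .
qed

text \<open>The deterministic conditions on the survival function S that make b an upper and a a
  lower threshold for Htilde X n in the sense of the two lemmas above.\<close>

definition upper_threshold :: "(real \<Rightarrow> real) \<Rightarrow> nat \<Rightarrow> nat \<Rightarrow> bool" where
  "upper_threshold S n b \<longleftrightarrow>
     real b \<le> real n * S (real b - 1) \<and> 1 \<le> real n * S (real b - 1) * (1 - S (real b - 1))"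

definition lower_threshold :: "(real \<Rightarrow> real) \<Rightarrow> nat \<Rightarrow> nat \<Rightarrow> bool" where
  "lower_threshold S n a \<longleftrightarrow>
     1 \<le> real n * S (real a) * (1 - S (real a)) \<and>
     real n * S (real a) - sqrt (real n * S (real a) * (1 - S (real a))) / 32 \<le> real a"

lemma last_crossing:
  fixes S :: "real \<Rightarrow> real"
  assumes S_le: "\<And>x. S x \<le> 1" and B: "1 \<le> B" "B \<le> n" "real B \<le> real n * S (real B - 1)"
  shows "\<exists>b. B \<le> b \<and> b \<le> n \<and> real b \<le> real n * S (real b - 1)
               \<and> real n * S (real b) < real b + 1"
proof -
  define K where "K = {k\<in>{1..n}. real k \<le> real n * S (real k - 1)}"
  have K: "finite K" "B \<in> K" using B by (auto simp: K_def)
  define b where "b = Max K"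
  have "K \<noteq> {}" using K by auto
  then have "b \<in> K" "B \<le> b" unfolding b_def using K Max_in Max_ge by auto
  then have b: "B \<le> b" "b \<le> n" "real b \<le> real n * S (real b - 1)" by (auto simp: K_def)
  have "real n * S (real b) < real b + 1"
  proof (cases "b < n")
    case True
    have "Suc b \<notin> K"
    proof
      assume "Suc b \<in> K"
      then have "Suc b \<le> b" unfolding b_def using K by simp
      then show False by simp
    qed
    then show ?thesis using True by (auto simp: K_def)
  next
    case False
    then have "b = n" using b(2) by simp
    have "real n * S (real b) \<le> real n * 1" using S_le by (intro mult_left_mono) auto
    then show ?thesis using \<open>b = n\<close> by simp
  qed
  with b show ?thesis by blast
qed

lemma decrement_telescope:
  fixes S :: "real \<Rightarrow> real"
  assumes "\<And>m. a < m \<Longrightarrow> m \<le> a + k \<Longrightarrow> S (real m - 1) - S (real m) \<le> d"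
  shows "S (real a) - S (real (a + k)) \<le> real k * d"
  using assms
proof (induction k)
  case 0
  then show ?case by simp
next
  case (Suc k)
  have "S (real a) - S (real (a + Suc k))
        = (S (real a) - S (real (a + k))) + (S (real (a + Suc k) - 1) - S (real (a + Suc k)))"
    by simp
  also have "\<dots> \<le> real k * d + d"
  proof (rule add_mono)
    show "S (real a) - S (real (a + k)) \<le> real k * d" using Suc by simp
    show "S (real (a + Suc k) - 1) - S (real (a + Suc k)) \<le> d" by (rule Suc.prems) auto
  qed
  finally show ?case by (simp add: algebra_simps)
qed

lemma flat_window:
  fixes S :: "real \<Rightarrow> real"
  assumes anti: "\<And>x y. x \<le> y \<Longrightarrow> S y \<le> S x"
    and flat: "\<And>m. M0 \<le> m \<Longrightarrow> sqrt (real m) * (S (real m - 1) - S (real m)) \<le> \<eta> * S (real m)"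
    and "M0 \<le> a" "L \<le> a" "0 \<le> \<eta>"
  shows "S (real a) - S (real (a + L)) \<le> real L * (2 * \<eta> * S (real a) / sqrt (real (a + L)))"
proof (rule decrement_telescope)
  fix m assume m: "a < m" "m \<le> a + L"
  define r where "r = sqrt (real (a + L))"
  have r: "0 < r" using m by (simp add: r_def)
  have "(r / 2)^2 \<le> real m" using m \<open>L \<le> a\<close> by (simp add: r_def power_divide)
  then have "r / 2 \<le> sqrt (real m)" by (rule real_le_rsqrt)
  then have "(r / 2) * (S (real m - 1) - S (real m)) \<le> sqrt (real m) * (S (real m - 1) - S (real m))"
    using anti[of "real m - 1" "real m"] by (intro mult_right_mono) auto
  also have "\<dots> \<le> \<eta> * S (real m)" using flat m \<open>M0 \<le> a\<close> by simp
  also have "\<dots> \<le> \<eta> * S (real a)" using anti m \<open>0 \<le> \<eta>\<close> by (intro mult_left_mono) auto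
  finally have "S (real m - 1) - S (real m) \<le> 2 * \<eta> * S (real a) / r"
    using r by (simp add: field_simps)
  then show "S (real m - 1) - S (real m) \<le> 2 * \<eta> * S (real a) / sqrt (real (a + L))"
    by (simp add: r_def)
qed

text \<open>Sufficient conditions for the threshold predicates; for the lower threshold, the
  crossing property at a + L and the flatness of S on [a, a + L] keep n S(a) at most
  sqrt(a + L)/64 above a.\<close>

lemma upper_threshold_intro:
  assumes "2 \<le> b" "0 \<le> S (real b - 1)" "S (real b - 1) \<le> 1/2"
    and "real b \<le> real n * S (real b - 1)"
  shows "upper_threshold S n b"
proof -
  have "real n * S (real b - 1) * (1/2) \<le> real n * S (real b - 1) * (1 - S (real b - 1))"
    using assms by (intro mult_left_mono) auto
  then show ?thesis using assms unfolding upper_threshold_def by linarith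
qed

lemma lower_threshold_intro:
  fixes S :: "real \<Rightarrow> real" and a L n :: nat
  defines "r \<equiv> sqrt (real (a + L))"
  assumes half: "S (real a) \<le> 1/2" and nonneg: "0 \<le> S (real (a + L))"
    and above: "real (a + L) \<le> real n * S (real a)"
    and window: "S (real a) - S (real (a + L)) \<le> S (real a) / (5000 * r)"
    and crossing: "real n * S (real (a + L)) < real (a + L) + 1"
    and big: "1000 * (real L + 1) \<le> r"
  shows "lower_threshold S n a"
proof -
  define q where "q = S (real a)"
  have rr: "r * r = real (a + L)" by (simp add: r_def)
  have r: "2 \<le> r" using big by simp
  have b4: "4 \<le> real (a + L)" using rr r mult_mono[of 2 r 2 r] by simp
  have var: "real (a + L) / 2 \<le> real n * q * (1 - q)"
  proof -
    have "real n * q * (1/2) \<le> real n * q * (1 - q)"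
      using half nonneg above r by (intro mult_left_mono) (auto simp: q_def)
    then show ?thesis using above by (simp add: q_def)
  qed
  have sqrt_var: "r / 2 \<le> sqrt (real n * q * (1 - q))"
    by (rule real_le_rsqrt) (use var rr in \<open>simp add: power2_eq_square\<close>)
  \<comment> \<open>Across the window the survival function is essentially constant, so n q stays
    at most r/64 above a.\<close>
  have "q \<le> 2 * S (real (a + L))"
    using window r divide_left_mono[of 2 "5000 * r" q] nonneg by (simp add: q_def) linarith
  then have "q / (5000 * r) \<le> 2 * S (real (a + L)) / (5000 * r)"
    using r by (intro divide_right_mono) auto
  then have "q - S (real (a + L)) \<le> S (real (a + L)) / (2500 * r)"
    using window by (simp add: q_def)
  then have "real n * (q - S (real (a + L))) \<le> real n * (S (real (a + L)) / (2500 * r))"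
    by (rule mult_left_mono) simp
  also have "\<dots> = real n * S (real (a + L)) / (2500 * r)" by simp
  also have "\<dots> \<le> 2 * real (a + L) / (2500 * r)"
    using crossing r b4 by (intro divide_right_mono) auto
  also have "\<dots> = r / 1250" using rr r by (simp add: field_simps)
  finally have "real n * q - real a \<le> r / 64"
    using crossing big by (simp add: algebra_simps)
  then show ?thesis
    using var sqrt_var b4 unfolding lower_threshold_def q_def[symmetric] by auto
qed

lemma eventually_flat:
  fixes S :: "real \<Rightarrow> real"
  assumes pos: "\<And>x. 0 \<le> x \<Longrightarrow> 0 < S x"
    and lim: "(\<lambda>n. sqrt (real n) * (S (real n - 1) - S (real n)) / S (real n)) \<longlonglongrightarrow> 0"
    and "0 < \<eta>"
  shows "\<forall>\<^sub>F m in sequentially. sqrt (real m) * (S (real m - 1) - S (real m)) \<le> \<eta> * S (real m)"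
proof -
  have "\<forall>\<^sub>F m in sequentially. sqrt (real m) * (S (real m - 1) - S (real m)) / S (real m) < \<eta>"
    using lim \<open>0 < \<eta>\<close> by (rule order_tendstoD)
  then show ?thesis
    by (rule eventually_mono) (use pos in \<open>simp add: divide_less_eq\<close>)
qed

lemma eventually_real_mult_ge:
  assumes "0 < c"
  shows "\<forall>\<^sub>F n in sequentially. x \<le> real n * c"
proof -
  have "\<forall>\<^sub>F n in sequentially. nat \<lceil>x / c\<rceil> \<le> n" by (rule eventually_ge_at_top)
  then show ?thesis
  proof (rule eventually_mono)
    fix n assume "nat \<lceil>x / c\<rceil> \<le> n"
    then have "x / c \<le> real n" by linarith
    then show "x \<le> real n * c" using assms by (simp add: divide_le_eq)
  qed
qed

lemma thresholds_near_crossing: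
  fixes S :: "real \<Rightarrow> real" and a L M0 n x0 :: nat
  defines "\<eta> \<equiv> 1 / (10000 * real L)"
  assumes anti: "\<And>x y. x \<le> y \<Longrightarrow> S y \<le> S x" and S_ge: "\<And>x. 0 \<le> S x"
    and half: "\<And>x. real x0 \<le> x \<Longrightarrow> S x \<le> 1/2"
    and flat: "\<And>m. M0 \<le> m \<Longrightarrow> sqrt (real m) * (S (real m - 1) - S (real m)) \<le> \<eta> * S (real m)"
    and L: "1 \<le> L" and a_large: "L + x0 + M0 \<le> a" and b_large: "1000000 * (L + 1)^2 \<le> a + L"
    and upper: "real (a + L) \<le> real n * S (real (a + L) - 1)"
    and crossing: "real n * S (real (a + L)) < real (a + L) + 1"
  shows "lower_threshold S n a \<and> upper_threshold S n (a + L)"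
proof
  have "(1000 * (L + 1))^2 = 1000000 * (L + 1)^2" by (simp only: power_mult_distrib) simp
  then have big_nat: "(1000 * (L + 1))^2 \<le> a + L" using b_large by simp
  have "(1000 * (real L + 1))^2 \<le> real (a + L)"
    using of_nat_mono[OF big_nat, where 'a=real] by (simp add: add.commute)
  then have big: "1000 * (real L + 1) \<le> sqrt (real (a + L))" by (rule real_le_rsqrt)
  have "S (real a) - S (real (a + L)) \<le> real L * (2 * \<eta> * S (real a) / sqrt (real (a + L)))"
    by (rule flat_window[OF anti flat]) (use a_large in \<open>auto simp: \<eta>_def\<close>)
  then have window: "S (real a) - S (real (a + L)) \<le> S (real a) / (5000 * sqrt (real (a + L)))"
    using L by (simp add: \<eta>_def)
  have "S (real (a + L) - 1) \<le> S (real a)" using anti L by simp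
  then have above: "real (a + L) \<le> real n * S (real a)"
    using upper mult_left_mono[of "S (real (a + L) - 1)" "S (real a)" "real n"] by simp
  show "lower_threshold S n a"
    using a_large by (intro lower_threshold_intro[OF half S_ge above window crossing big]) simp
  show "upper_threshold S n (a + L)"
  proof (rule upper_threshold_intro)
    show "2 \<le> a + L" using a_large L by simp
    show "S (real (a + L) - 1) \<le> 1/2" using a_large L by (intro half) simp
  qed (use S_ge upper in auto)
qed

text \<open>For every distance L, all sufficiently large n admit a lower threshold a and an
  upper threshold a + L: take for a + L the last crossing level up to n.\<close>

lemma thresholds_at_distance:
  fixes S :: "real \<Rightarrow> real" and L :: nat
  assumes anti: "\<And>x y. x \<le> y \<Longrightarrow> S y \<le> S x"
    and S_ge: "\<And>x. 0 \<le> S x" and S_le: "\<And>x. S x \<le> 1" and pos: "\<And>x. 0 \<le> x \<Longrightarrow> 0 < S x"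
    and to_zero: "(\<lambda>k. S (real k)) \<longlonglongrightarrow> 0"
    and lim: "(\<lambda>n. sqrt (real n) * (S (real n - 1) - S (real n)) / S (real n)) \<longlonglongrightarrow> 0"
    and L: "1 \<le> L"
  shows "\<forall>\<^sub>F n in sequentially.
           \<exists>a. 1 \<le> a \<and> a + L \<le> n \<and> lower_threshold S n a \<and> upper_threshold S n (a + L)"
proof -
  obtain x0 :: nat where x0: "\<And>x. real x0 \<le> x \<Longrightarrow> S x \<le> 1/2"
  proof -
    have "\<forall>\<^sub>F k in sequentially. S (real k) < 1/2" using to_zero by (rule order_tendstoD) simp
    then obtain k where "S (real k) < 1/2" by (auto simp: eventually_sequentially)
    then show ?thesis using anti by (intro that[of k]) (meson less_eq_real_def order_trans)
  qed
  have "0 < 1 / (10000 * real L)" using L by simp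
  from eventually_flat[OF pos lim this] obtain M0 where M0:
    "\<And>m. M0 \<le> m \<Longrightarrow>
            sqrt (real m) * (S (real m - 1) - S (real m)) \<le> 1 / (10000 * real L) * S (real m)"
    by (auto simp: eventually_sequentially)
  define B where "B = 1000000 * (L + 1)^2 + 2 * L + x0 + M0 + 2"
  have "\<forall>\<^sub>F n in sequentially. B \<le> n \<and> real B \<le> real n * S (real B - 1)"
    using eventually_ge_at_top eventually_real_mult_ge[OF pos] by (auto simp: B_def intro: eventually_conj)
  then show ?thesis
  proof (rule eventually_mono)
    fix n assume n: "B \<le> n \<and> real B \<le> real n * S (real B - 1)"
    have "1 \<le> B" by (simp add: B_def)
    then obtain b where b: "B \<le> b" "b \<le> n" "real b \<le> real n * S (real b - 1)"
      and crossing: "real n * S (real b) < real b + 1"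
      using last_crossing[of S B n] S_le n by blast
    define a where "a = b - L"
    have b_large: "1000000 * (L + 1)^2 \<le> b" "2 * L + x0 + M0 + 2 \<le> b"
      using b(1) unfolding B_def by linarith+
    then have ab: "b = a + L" and a: "L + x0 + M0 \<le> a" "1 \<le> a"
      unfolding a_def by linarith+
    have "lower_threshold S n a \<and> upper_threshold S n (a + L)"
      using b crossing b_large unfolding ab
      by (intro thresholds_near_crossing[OF anti S_ge x0 M0 L a(1)]) auto
    then show "\<exists>a. 1 \<le> a \<and> a + L \<le> n \<and> lower_threshold S n a \<and> upper_threshold S n (a + L)"
      using a(2) b(2) ab by auto
  qed
qed

lemma (in prob_space) Htilde_variance_at_thresholds:
  fixes X :: "nat \<Rightarrow> 'a \<Rightarrow> real" and S :: "real \<Rightarrow> real"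
  assumes rv: "\<And>i. X i \<in> borel_measurable M"
    and indep: "indep_vars (\<lambda>_. borel) X UNIV"
    and tail: "\<And>i t. prob {w\<in>space M. t < X i w} = S t"
    and a: "1 \<le> a" "a + L \<le> n"
    and low: "lower_threshold S n a" and up: "upper_threshold S n (a + L)"
  shows "(real L)^2 / 1024 \<le> variance (Htilde X n)"
proof (cases "L = 0")
  case True
  then show ?thesis using variance_positive by simp
next
  case False
  have "1/256 \<le> prob {w\<in>space M. Htilde X n w \<le> real a}"
    using low a by (intro Htilde_lower_event[OF rv indep tail]) (auto simp: lower_threshold_def)
  moreover have "1/256 \<le> prob {w\<in>space M. real (a + L) \<le> Htilde X n w}"
    using up a by (intro Htilde_upper_event[OF rv indep tail]) (auto simp: upper_threshold_def)
  ultimately have "1/256 * ((real (a + L) - real a) / 2)^2 \<le> variance (Htilde X n)"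
    using False by (intro variance_ge_two_point[OF Htilde_measurable[OF rv] Htilde_bounded]) auto
  then show ?thesis by (simp add: power_divide)
qed

text \<open>The main theorem: for every Z choose L with L^2/1024 \<ge> Z; thresholds at distance L
  exist for all large n, so the variance of Htilde eventually exceeds Z.\<close>

theorem theorem4p2:
  fixes M :: "'a measure" and X :: "nat \<Rightarrow> 'a \<Rightarrow> real"
  assumes "prob_space M"
    and rv: "\<And>i. X i \<in> borel_measurable M"
    and indep: "prob_space.indep_vars M (\<lambda>_. borel) X UNIV"
    and ident: "\<And>i. distr M borel (X i) = distr M borel (X 0)"
    and "AE \<omega> in M. X 0 \<omega> > 0"
    and S_pos: "\<And>x. x \<ge> 0 \<Longrightarrow> surv M (X 0) x > 0"
    and lim: "(\<lambda>n. sqrt (real n) * (surv M (X 0) (real n - 1) - surv M (X 0) (real n))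
                     / surv M (X 0) (real n)) \<longlonglongrightarrow> 0"
  shows "filterlim (\<lambda>n. prob_space.variance M (Htilde X n)) at_top sequentially"
proof -
  interpret prob_space M by fact
  define S where "S = surv M (X 0)"
  have tail: "\<And>i t. prob {w\<in>space M. t < X i w} = S t"
    unfolding S_def using rv ident by (rule surv_of_identically_distributed)
  have anti: "\<And>x y. x \<le> y \<Longrightarrow> S y \<le> S x"
    unfolding S_def by (rule surv_antimono[OF finite_measure_axioms rv])
  have S_ge: "\<And>x. 0 \<le> S x" and S_le: "\<And>x. S x \<le> 1" by (simp_all add: S_def surv_def)
  have to_zero: "(\<lambda>k. S (real k)) \<longlonglongrightarrow> 0"
    unfolding S_def by (rule surv_tendsto_zero[OF finite_measure_axioms rv])
  show ?thesis
    unfolding filterlim_at_top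
  proof
    fix Z :: real
    define L :: nat where "L = nat \<lceil>1024 * \<bar>Z\<bar>\<rceil> + 1"
    have L: "1 \<le> L" by (simp add: L_def)
    have "1024 * Z \<le> real L" unfolding L_def by linarith
    also have "\<dots> \<le> (real L)^2" using L by (simp add: power2_eq_square)
    finally have LZ: "Z \<le> (real L)^2 / 1024" by simp
    show "\<forall>\<^sub>F n in sequentially. Z \<le> variance (Htilde X n)"
      using thresholds_at_distance[OF anti S_ge S_le S_pos[folded S_def] to_zero lim[folded S_def] L]
    proof (rule eventually_mono)
      fix n assume "\<exists>a. 1 \<le> a \<and> a + L \<le> n \<and> lower_threshold S n a \<and> upper_threshold S n (a + L)"
      then have "(real L)^2 / 1024 \<le> variance (Htilde X n)"
        using Htilde_variance_at_thresholds[OF rv indep tail] by blast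
      then show "Z \<le> variance (Htilde X n)" using LZ by linarith
    qed
  qed
qed

end
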